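(* Let $G$ be a countable group and $\nu$ a probability measure of full support on $G$; let $(z_1,z_2,\ldots)$, $z_n = x_1\cdots x_n$, denote a trajectory of the $\nu$-random walk. Let $W_i, W'_i\subseteq G$, $i\in\mathbb N$, be subsets with $W'_i\subseteq W_i$ for all $i$ and $W_i\cap W_j=\varnothing$ for $i\neq j$. For $g\in G$ let $\mathrm{rank}(g)=i$ if $g\in W_i$ and $\mathrm{rank}(g)=0$ if $g\notin\bigcup_i W_i$. Let $p:\bigcup_{i}W_i\to G$ be a function. Assume: (1) $\mathrm{rank}(p(g))<\mathrm{rank}(g)$ for every $g\in\bigcup_i W_i$; (2) for every $h\in G$ there is $N$ such that for all $i>N$ we have $hW'_i\subseteq W_i$ and $p(hw)=h\,p(w)$ for all $w\in W'_i$; (3) for almost every trajectory $(z_1,z_2,\ldots)$ there is $i_0$ such that for every $i>i_0$ there is $j$ with $z_i\in W'_j$; (4) for almost every trajectory there is $i_0$ such that for all $i>i_0$, either $p(z_{i+1})=p(z_i)$ or $p(z_{i+1})=z_i$; (5) for almost every trajectory the sequence $(\mathrm{rank}(z_i))_i$ is unbounded. Then the Poisson–Furstenberg boundary $\partial(G,\nu)$ is non-trivial, and moreover the action of $G$ on $\partial(G,\nu)$ is essentially free.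
   Context: The Poisson–Furstenberg boundary $\partial(G,\nu)$ is the space of ergodic components of the time shift on the space $G^{\mathbb N}$ of trajectories of the $\nu$-random walk (for non-degenerate $\nu$ equivalently the tail boundary), with $G$ acting by left multiplication on trajectories. Essentially free means that for each $h\neq 1$, almost every boundary point is not fixed by $h$. *)

theory Defs
  imports "HOL-Probability.Probability"
begin

text \<open>The group G is a type of class group_add (not necessarily commutative;
  the group operation is written +, the identity 0, inverses -) that is countable.\<close>

text \<open>Position of the random walk: rw_pos x n = x 0 + x 1 + ... + x n,
  i.e. rw_pos x (n-1) is z_n = x_1 ... x_n of the paper (0-based indexing).\<close>
fun rw_pos :: "(nat \<Rightarrow> 'g::group_add) \<Rightarrow> nat \<Rightarrow> 'g" where
  "rw_pos x 0 = x 0"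
| "rw_pos x (Suc n) = rw_pos x n + x (Suc n)"

definition traj_space :: "(nat \<Rightarrow> 'g::countable) measure" where
  "traj_space = PiM UNIV (\<lambda>_::nat. count_space UNIV)"

definition rw_traj :: "'g::{group_add,countable} pmf \<Rightarrow> (nat \<Rightarrow> 'g) measure" where
  "rw_traj \<nu> = distr (PiM UNIV (\<lambda>_::nat. measure_pmf \<nu>)) traj_space rw_pos"

text \<open>Shift-invariant events; the Poisson--Furstenberg boundary is the space of
  ergodic components of the shift, i.e. its measure algebra is that of these events.\<close>
definition shift_invariant_sets :: "(nat \<Rightarrow> 'g::countable) set set" where
  "shift_invariant_sets = {A \<in> sets traj_space. (\<lambda>z. z \<circ> Suc) -` A = A}"

text \<open>Left translation of an event by h: h A = {(h + z n)_n | z \<in> A}.\<close>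
definition left_translate :: "'g::group_add \<Rightarrow> (nat \<Rightarrow> 'g) set \<Rightarrow> (nat \<Rightarrow> 'g) set" where
  "left_translate h A = (\<lambda>z n. - h + z n) -` A"

definition poisson_boundary_nontrivial :: "'g::{group_add,countable} pmf \<Rightarrow> bool" where
  "poisson_boundary_nontrivial \<nu> \<longleftrightarrow>
     (\<exists>A \<in> shift_invariant_sets. 0 < measure (rw_traj \<nu>) A \<and> measure (rw_traj \<nu>) A < 1)"

text \<open>h fixes (pointwise) the part E of the boundary: E has positive measure and
  h acts trivially (mod null sets) on every boundary event contained in E.\<close>
definition boundary_fixed_part :: "'g::{group_add,countable} pmf \<Rightarrow> 'g \<Rightarrow> (nat \<Rightarrow> 'g) set \<Rightarrow> bool" where
  "boundary_fixed_part \<nu> h E \<longleftrightarrow> E \<in> shift_invariant_sets \<and> 0 < measure (rw_traj \<nu>) E \<and>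
     (\<forall>B \<in> shift_invariant_sets. B \<subseteq> E \<longrightarrow>
        measure (rw_traj \<nu>) ((left_translate h B - B) \<union> (B - left_translate h B)) = 0)"

definition boundary_action_essentially_free :: "'g::{group_add,countable} pmf \<Rightarrow> bool" where
  "boundary_action_essentially_free \<nu> \<longleftrightarrow>
     (\<forall>h. h \<noteq> 0 \<longrightarrow> \<not> (\<exists>E. boundary_fixed_part \<nu> h E))"

definition rank :: "(nat \<Rightarrow> 'g set) \<Rightarrow> 'g \<Rightarrow> nat" where
  "rank W g = (if \<exists>i\<ge>1. g \<in> W i then (THE i. 1 \<le> i \<and> g \<in> W i) else 0)"

end

theory Submission
  imports Defs
begin

text \<open>An invariant event does not see the first step of the walk, so its probability is the
  \<open>\<nu>\<close>-average of the probabilities of its translates; as \<open>\<nu>\<close> has full support, translates of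
  invariant null events are null. Hence a trivial boundary is fixed pointwise by every \<open>h\<close>,
  and non-triviality follows from essential freeness once \<open>G \<noteq> {0}\<close>, which the unbounded
  ranks guarantee.

  For essential freeness it suffices to separate almost every trajectory \<open>z\<close> from its
  translate \<open>h z\<close> (\<open>h \<noteq> 0\<close>) by one event of a fixed countable family of tail events. If the
  parents \<open>p z\<^sub>i\<close> eventually equal some \<open>c\<close>, then \<open>p (h z\<^sub>i) = h c \<noteq> c\<close> at the infinitely
  many times of large rank. Otherwise the parent switches to \<open>z\<^sub>k\<close> at infinitely many
  times \<open>k\<close>, and \<open>z\<^sub>k\<close> is then an ancestor of all later \<open>z\<^sub>i\<close>; choosing \<open>k\<close> of large rank,
  \<open>h z\<^sub>k\<close> is likewise an ancestor of all later \<open>h z\<^sub>i\<close>. Since ranks strictly decrease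
  along ancestor chains, \<open>h z\<^sub>i\<close> cannot also have \<open>z\<^sub>k \<noteq> h z\<^sub>k\<close> as an ancestor of the same
  rank, so the event "eventually \<open>z\<^sub>k\<close> is an ancestor" separates \<open>z\<close> from \<open>h z\<close>.\<close>

lemma space_traj_space [simp]: "space traj_space = UNIV"
  unfolding traj_space_def by (simp add: space_PiM)

lemma sets_rw_traj [simp]: "sets (rw_traj \<nu>) = sets traj_space"
  unfolding rw_traj_def by simp

lemma space_rw_traj [simp]: "space (rw_traj \<nu>) = UNIV"
  unfolding rw_traj_def by simp

lemma measurable_traj_component: "(\<lambda>z. z i) \<in> traj_space \<rightarrow>\<^sub>M count_space UNIV"
  unfolding traj_space_def by (rule measurable_component_singleton) simp

lemma measurable_rw_pos: "rw_pos \<in> PiM UNIV (\<lambda>_. measure_pmf \<nu>) \<rightarrow>\<^sub>M traj_space"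
proof -
  let ?P = "PiM UNIV (\<lambda>_. measure_pmf \<nu>)"
  have component: "(\<lambda>x. x i) \<in> ?P \<rightarrow>\<^sub>M count_space UNIV" for i
    using measurable_component_singleton[of i UNIV "\<lambda>_. measure_pmf \<nu>"] by simp
  have "(\<lambda>x. rw_pos x n) \<in> ?P \<rightarrow>\<^sub>M count_space UNIV" for n
  proof (induction n)
    case 0
    then show ?case using component by simp
  next
    case (Suc n)
    have "(\<lambda>x. (\<lambda>s x. rw_pos x n + s) (x (Suc n)) x) \<in> ?P \<rightarrow>\<^sub>M count_space UNIV"
      by (rule measurable_compose_countable'[where I=UNIV, OF _ component])
        (use measurable_compose[OF Suc measurable_count_space] in auto)
    then show ?case by simp
  qed
  then show ?thesis
    unfolding traj_space_def by (intro measurable_PiM_single') auto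
qed

lemma prob_space_rw_traj: "prob_space (rw_traj \<nu>)"
  unfolding rw_traj_def
  by (rule prob_space.prob_space_distr[OF prob_space_PiM measurable_rw_pos])
    (rule prob_space_measure_pmf)

lemma measurable_translate_path: "(\<lambda>z n. a + z n) \<in> traj_space \<rightarrow>\<^sub>M traj_space"
proof -
  have "(\<lambda>z n. a + z n) \<in> traj_space \<rightarrow>\<^sub>M PiM UNIV (\<lambda>_::nat. count_space UNIV)"
    by (intro measurable_PiM_single')
      (use measurable_compose[OF measurable_traj_component measurable_count_space] in auto)
  then show ?thesis unfolding traj_space_def .
qed

section \<open>Invariant events and quasi-invariance\<close>

lemma sets_left_translate: "B \<in> sets traj_space \<Longrightarrow> left_translate h B \<in> sets traj_space"
  using measurable_sets[OF measurable_translate_path, of B "- h"] by (simp add: left_translate_def)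

lemma left_translate_Diff: "left_translate h (A - B) = left_translate h A - left_translate h B"
  and left_translate_Int: "left_translate h (A \<inter> B) = left_translate h A \<inter> left_translate h B"
  and left_translate_UNIV: "left_translate h UNIV = UNIV"
  by (auto simp: left_translate_def)

lemma shift_invariant_sets_sets: "B \<in> shift_invariant_sets \<Longrightarrow> B \<in> sets traj_space"
  by (simp add: shift_invariant_sets_def)

lemma shift_invariant_mem_iff: "B \<in> shift_invariant_sets \<Longrightarrow> z \<circ> Suc \<in> B \<longleftrightarrow> z \<in> B"
  unfolding shift_invariant_sets_def by (metis (mono_tags) CollectD vimage_eq)

lemma shift_invariant_sets_Int:
  "A \<in> shift_invariant_sets \<Longrightarrow> B \<in> shift_invariant_sets \<Longrightarrow> A \<inter> B \<in> shift_invariant_sets"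
  unfolding shift_invariant_sets_def by auto

lemma shift_invariant_sets_Compl: "B \<in> shift_invariant_sets \<Longrightarrow> UNIV - B \<in> shift_invariant_sets"
  using sets.compl_sets[of B traj_space] unfolding shift_invariant_sets_def by auto

lemma shift_invariant_sets_UNIV: "UNIV \<in> shift_invariant_sets"
  unfolding shift_invariant_sets_def using sets.top[of traj_space] by simp

definition eventually_in :: "'a set \<Rightarrow> (nat \<Rightarrow> 'a) set" where
  "eventually_in S = {z. \<forall>\<^sub>F i in sequentially. z i \<in> S}"

lemma eventually_in_shift_invariant: "eventually_in (S::'g::countable set) \<in> shift_invariant_sets"
proof -
  have "{z \<in> space traj_space. \<forall>\<^sub>F i in sequentially. z i \<in> S} \<in> sets traj_space"
    by (intro sets_Collect_eventually_sequentially)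
      (use measurable_sets[OF measurable_traj_component] in \<open>auto simp: vimage_def\<close>)
  moreover have "z \<circ> Suc \<in> eventually_in S \<longleftrightarrow> z \<in> eventually_in S" for z
    using eventually_sequentially_Suc[of "\<lambda>i. z i \<in> S"] by (simp add: eventually_in_def)
  ultimately show ?thesis
    by (auto simp: shift_invariant_sets_def eventually_in_def)
qed

lemma rw_pos_case_nat: "rw_pos (case_nat s x) (Suc n) = s + rw_pos x n"
  by (induction n) (simp_all add: add.assoc)

lemma emeasure_rw_traj_distr:
  "B \<in> sets traj_space \<Longrightarrow>
    emeasure (rw_traj \<nu>) B = emeasure (PiM UNIV (\<lambda>_. measure_pmf \<nu>)) (rw_pos -` B \<inter> space (PiM UNIV (\<lambda>_. measure_pmf \<nu>)))"
  unfolding rw_traj_def by (rule emeasure_distr[OF measurable_rw_pos]) simp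

text \<open>The Markov property at time one, for an invariant event.\<close>

lemma emeasure_rw_traj_shift_invariant:
  fixes \<nu> :: "'g::{group_add,countable} pmf"
  assumes B: "B \<in> shift_invariant_sets"
  shows "emeasure (rw_traj \<nu>) B = (\<integral>\<^sup>+s. emeasure (rw_traj \<nu>) (left_translate (- s) B) \<partial>measure_pmf \<nu>)"
proof -
  interpret S: sequence_space "measure_pmf \<nu>"
    by unfold_locales
  let ?P = "PiM UNIV (\<lambda>_::nat. measure_pmf \<nu>)"
  let ?Q = "measure_pmf \<nu> \<Otimes>\<^sub>M ?P"
  have Bs: "B \<in> sets traj_space"
    using B by (rule shift_invariant_sets_sets)
  define X where "X = {x \<in> space ?Q. rw_pos (case_nat (fst x) (snd x)) \<in> B}"
  have case_nat_measurable: "(\<lambda>(s, \<omega>). case_nat s \<omega>) \<in> ?Q \<rightarrow>\<^sub>M ?P"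
    using measurable_case_nat'[OF measurable_fst measurable_snd] by (simp add: split_beta')
  have X: "X \<in> sets ?Q"
    using measurable_sets[OF measurable_comp[OF case_nat_measurable measurable_rw_pos] Bs]
    by (simp add: X_def vimage_def Int_def conj_commute split_beta')
  have slice: "Pair s -` X = rw_pos -` left_translate (- s) B \<inter> space ?P" for s
  proof -
    have "rw_pos (case_nat s \<omega>) \<in> B \<longleftrightarrow> rw_pos (case_nat s \<omega>) \<circ> Suc \<in> B" for \<omega>
      using shift_invariant_mem_iff[OF B] by simp
    moreover have "rw_pos (case_nat s \<omega>) \<circ> Suc = (\<lambda>n. s + rw_pos \<omega> n)" for \<omega>
      by (rule ext) (simp only: comp_apply rw_pos_case_nat)
    ultimately show ?thesis
      by (auto simp: X_def left_translate_def space_pair_measure space_PiM)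
  qed
  have "emeasure (rw_traj \<nu>) B = emeasure (distr ?Q ?P (\<lambda>(s, \<omega>). case_nat s \<omega>)) (rw_pos -` B \<inter> space ?P)"
    by (simp add: emeasure_rw_traj_distr Bs S.PiM_iter)
  also have "\<dots> = emeasure ?Q X"
    by (subst emeasure_distr[OF case_nat_measurable measurable_sets[OF measurable_rw_pos Bs]])
      (auto simp: X_def space_pair_measure space_PiM intro!: arg_cong[where f="emeasure ?Q"])
  also have "\<dots> = (\<integral>\<^sup>+s. emeasure ?P (Pair s -` X) \<partial>measure_pmf \<nu>)"
    by (rule S.emeasure_pair_measure_alt[OF X])
  also have "\<dots> = (\<integral>\<^sup>+s. emeasure (rw_traj \<nu>) (left_translate (- s) B) \<partial>measure_pmf \<nu>)"
    by (simp add: slice emeasure_rw_traj_distr sets_left_translate Bs)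
  finally show ?thesis .
qed

lemma emeasure_left_translate_null:
  fixes \<nu> :: "'g::{group_add,countable} pmf"
  assumes "set_pmf \<nu> = UNIV" and B: "B \<in> shift_invariant_sets" and "emeasure (rw_traj \<nu>) B = 0"
  shows "emeasure (rw_traj \<nu>) (left_translate h B) = 0"
proof -
  have "AE s in measure_pmf \<nu>. emeasure (rw_traj \<nu>) (left_translate (- s) B) = 0"
    using assms emeasure_rw_traj_shift_invariant[OF B, of \<nu>] by (simp add: nn_integral_0_iff_AE)
  then have "\<forall>s. emeasure (rw_traj \<nu>) (left_translate (- s) B) = 0"
    using assms(1) by (simp add: AE_measure_pmf_iff)
  from this[rule_format, of "- h"] show ?thesis
    by simp
qed

lemma measure_symdiff_left_translate_null:
  fixes \<nu> :: "'g::{group_add,countable} pmf"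
  assumes "set_pmf \<nu> = UNIV" and B: "B \<in> shift_invariant_sets" and "emeasure (rw_traj \<nu>) B = 0"
  shows "measure (rw_traj \<nu>) ((left_translate h B - B) \<union> (B - left_translate h B)) = 0"
proof -
  have Bs: "B \<in> sets traj_space"
    using B by (rule shift_invariant_sets_sets)
  have "B \<in> null_sets (rw_traj \<nu>)" "left_translate h B \<in> null_sets (rw_traj \<nu>)"
    using assms emeasure_left_translate_null[OF assms] by (auto simp: Bs sets_left_translate)
  then have "(left_translate h B - B) \<union> (B - left_translate h B) \<in> null_sets (rw_traj \<nu>)"
    by (auto intro: null_sets_subset[of "B \<union> left_translate h B"] simp: Bs sets_left_translate)
  then show ?thesis
    by (simp add: measure_def null_setsD1)
qed

section \<open>Criteria for non-triviality and essential freeness\<close>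

lemma boundary_fixed_part_UNIV_if_trivial:
  fixes \<nu> :: "'g::{group_add,countable} pmf"
  assumes full: "set_pmf \<nu> = UNIV" and trivial: "\<not> poisson_boundary_nontrivial \<nu>"
  shows "boundary_fixed_part \<nu> h UNIV"
  unfolding boundary_fixed_part_def
proof (intro conjI ballI impI shift_invariant_sets_UNIV)
  interpret prob_space "rw_traj \<nu>"
    by (rule prob_space_rw_traj)
  show "0 < measure (rw_traj \<nu>) UNIV"
    using prob_space by simp
  fix B :: "(nat \<Rightarrow> 'g) set"
  assume B: "B \<in> shift_invariant_sets"
  have "\<not> (0 < measure (rw_traj \<nu>) B \<and> measure (rw_traj \<nu>) B < 1)"
    using trivial B unfolding poisson_boundary_nontrivial_def by blast
  then have "measure (rw_traj \<nu>) B = 0 \<or> measure (rw_traj \<nu>) B = 1"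
    using prob_le_1[of B] measure_nonneg[of "rw_traj \<nu>" B] by linarith
  then show "measure (rw_traj \<nu>) ((left_translate h B - B) \<union> (B - left_translate h B)) = 0"
  proof
    assume "measure (rw_traj \<nu>) B = 0"
    then show ?thesis
      using measure_symdiff_left_translate_null[OF full B] emeasure_eq_measure by simp
  next
    assume "measure (rw_traj \<nu>) B = 1"
    then have "emeasure (rw_traj \<nu>) (UNIV - B) = 0"
      using prob_compl[of B] shift_invariant_sets_sets[OF B] emeasure_eq_measure by simp
    moreover have "(left_translate h (UNIV - B) - (UNIV - B)) \<union> ((UNIV - B) - left_translate h (UNIV - B))
        = (left_translate h B - B) \<union> (B - left_translate h B)"
      by (auto simp: left_translate_Diff left_translate_UNIV)
    ultimately show ?thesis
      using measure_symdiff_left_translate_null[OF full shift_invariant_sets_Compl[OF B], of h] by metis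
  qed
qed

lemma poisson_boundary_nontrivial_if_essentially_free:
  fixes \<nu> :: "'g::{group_add,countable} pmf"
  assumes "set_pmf \<nu> = UNIV" "boundary_action_essentially_free \<nu>" "(h::'g) \<noteq> 0"
  shows "poisson_boundary_nontrivial \<nu>"
  using assms boundary_fixed_part_UNIV_if_trivial[OF assms(1)]
  unfolding boundary_action_essentially_free_def by blast

lemma AE_mem_iff_mem_left_translate:
  assumes "boundary_fixed_part \<nu> h E" "B \<in> shift_invariant_sets" "B \<subseteq> E"
  shows "AE z in rw_traj \<nu>. z \<in> B \<longleftrightarrow> z \<in> left_translate h B"
proof -
  let ?D = "(left_translate h B - B) \<union> (B - left_translate h B)"
  interpret prob_space "rw_traj \<nu>"
    by (rule prob_space_rw_traj)
  have "?D \<in> sets (rw_traj \<nu>)"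
    using shift_invariant_sets_sets[OF assms(2)] by (intro sets.Un sets.Diff) (auto simp: sets_left_translate)
  moreover have "measure (rw_traj \<nu>) ?D = 0"
    using assms unfolding boundary_fixed_part_def by blast
  ultimately have "?D \<in> null_sets (rw_traj \<nu>)"
    by (simp add: null_sets_def emeasure_eq_measure)
  then have "AE z in rw_traj \<nu>. z \<notin> ?D"
    by (rule AE_not_in)
  then show ?thesis
    by (rule AE_mp) auto
qed

text \<open>By countability, on a part \<open>E\<close> fixed by \<open>h\<close> almost every trajectory lies in \<open>E \<inter> B\<close>
  exactly when its translate does, simultaneously for all \<open>B \<in> \<B>\<close>.\<close>

lemma essentially_free_if_separated:
  fixes \<nu> :: "'g::{group_add,countable} pmf"
  assumes "countable \<B>" "\<B> \<subseteq> shift_invariant_sets"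
    and separated: "\<And>h. h \<noteq> 0 \<Longrightarrow> AE z in rw_traj \<nu>. \<exists>B\<in>\<B>. z \<in> B \<longleftrightarrow> z \<notin> left_translate h B"
  shows "boundary_action_essentially_free \<nu>"
  unfolding boundary_action_essentially_free_def
proof (intro allI impI notI, elim exE)
  fix h :: 'g and E
  assume "h \<noteq> 0" and E: "boundary_fixed_part \<nu> h E"
  have E_inv: "E \<in> shift_invariant_sets" and "0 < measure (rw_traj \<nu>) E"
    using E unfolding boundary_fixed_part_def by auto
  have "AE z in rw_traj \<nu>. \<forall>B\<in>\<B>. z \<in> E \<inter> B \<longleftrightarrow> z \<in> left_translate h (E \<inter> B)"
  proof (subst AE_ball_countable[OF assms(1)], intro ballI)
    fix B assume "B \<in> \<B>"
    then show "AE z in rw_traj \<nu>. z \<in> E \<inter> B \<longleftrightarrow> z \<in> left_translate h (E \<inter> B)"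
      using assms(2) by (intro AE_mem_iff_mem_left_translate[OF E] shift_invariant_sets_Int E_inv) auto
  qed
  moreover have "AE z in rw_traj \<nu>. z \<in> E \<longleftrightarrow> z \<in> left_translate h E"
    using AE_mem_iff_mem_left_translate[OF E E_inv] by simp
  ultimately have "AE z in rw_traj \<nu>. z \<notin> E"
    using separated[OF \<open>h \<noteq> 0\<close>] by eventually_elim (auto simp: left_translate_Int)
  then have "emeasure (rw_traj \<nu>) E = 0"
    using AE_iff_measurable[of E "rw_traj \<nu>" "\<lambda>z. z \<notin> E"] shift_invariant_sets_sets[OF E_inv] by auto
  with \<open>0 < measure (rw_traj \<nu>) E\<close> show False
    by (simp add: measure_def)
qed

section \<open>Ancestors along a trajectory\<close>

inductive ancestor :: "('g \<Rightarrow> 'g) \<Rightarrow> ('g \<Rightarrow> nat) \<Rightarrow> 'g \<Rightarrow> 'g \<Rightarrow> bool" for p r where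
  parent: "0 < r g \<Longrightarrow> ancestor p r g (p g)"
| step: "0 < r g \<Longrightarrow> ancestor p r (p g) c \<Longrightarrow> ancestor p r g c"

lemma ancestor_rank_less:
  assumes "\<And>g. 0 < r g \<Longrightarrow> r (p g) < r g"
  shows "ancestor p r g c \<Longrightarrow> r c < r g"
  by (induction rule: ancestor.induct) (use assms less_trans in blast)+

lemma ancestor_eq_if_rank_eq:
  assumes rank_parent: "\<And>g. 0 < r g \<Longrightarrow> r (p g) < r g"
  shows "ancestor p r g c \<Longrightarrow> ancestor p r g c' \<Longrightarrow> r c = r c' \<Longrightarrow> c = c'"
proof (induction arbitrary: c' rule: ancestor.induct)
  case (parent g)
  from parent.prems(1) show ?case
  proof cases
    case step
    then show ?thesis
      using ancestor_rank_less[of r p, OF rank_parent, of "p g" c'] parent.prems(2) by simp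
  qed simp
next
  case (step g c)
  from step.prems(1) show ?case
  proof cases
    case parent
    then show ?thesis
      using ancestor_rank_less[of r p, OF rank_parent step.hyps(2)] step.prems(2) by simp
  next
    case step
    then show ?thesis
      using step.IH step.prems(2) by blast
  qed
qed

lemma ancestor_transfer:
  assumes "0 < r y" "p y = p x \<or> p y = x" "ancestor p r x c"
  shows "ancestor p r y c"
  using assms(2)
proof
  assume "p y = p x"
  with assms(3) show ?thesis
    by cases (use assms(1) ancestor.intros in metis)+
next
  assume "p y = x"
  with assms(1,3) show ?thesis
    by (metis ancestor.step)
qed

lemma ancestor_along_trajectory:
  assumes "\<And>i. k < i \<Longrightarrow> 0 < r (z i) \<and> (p (z (Suc i)) = p (z i) \<or> p (z (Suc i)) = z i)"
    and "p (z (Suc k)) = z k" and "k < i"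
  shows "ancestor p r (z i) (z k)"
proof -
  from \<open>k < i\<close> have "Suc k \<le> i" by simp
  then show ?thesis
  proof (induction i rule: dec_induct)
    case base
    then show ?case
      using assms(1,2) ancestor.parent[of r "z (Suc k)" p] by simp
  next
    case (step i)
    then show ?case
      using assms(1)[of i] assms(1)[of "Suc i"] by (intro ancestor_transfer[OF _ _ step.IH]) auto
  qed
qed

lemma frequently_less_if_unbounded:
  fixes f :: "nat \<Rightarrow> nat"
  assumes "\<not> bdd_above (range f)"
  shows "\<exists>\<^sub>F i in sequentially. M < f i"
  unfolding frequently_sequentially
proof
  fix N
  let ?B = "max M (Max (f ` {..<N}))"
  have "\<not> (\<forall>i. f i \<le> ?B)"
    using assms bdd_aboveI2[of UNIV f ?B] by auto
  then obtain i where i: "?B < f i"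
    by (auto simp: not_le)
  have "N \<le> i"
  proof (rule ccontr)
    assume "\<not> N \<le> i"
    then have "f i \<le> Max (f ` {..<N})"
      by (intro Max_ge) auto
    with i show False
      by simp
  qed
  with i show "\<exists>i\<ge>N. M < f i"
    by auto
qed

lemma eventually_const_if_eventually_Suc_eq:
  assumes "\<forall>\<^sub>F i in sequentially. a (Suc i) = a i"
  shows "\<exists>c. \<forall>\<^sub>F i in sequentially. a i = c"
proof -
  obtain N where N: "\<And>i. N \<le> i \<Longrightarrow> a (Suc i) = a i"
    using assms by (auto simp: eventually_sequentially)
  have "a i = a N" if "N \<le> i" for i
    using that by (induction i rule: dec_induct) (simp_all add: N)
  then show ?thesis
    by (auto simp: eventually_sequentially)
qed

text \<open>Ranks at successive switches (times \<open>k\<close> with \<open>p (z (Suc k)) = z k\<close>) strictly increase,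
  as \<open>z k\<close> is an ancestor of every later \<open>z i\<close>.\<close>

lemma frequently_switch_of_large_rank:
  fixes r :: "'g \<Rightarrow> nat"
  assumes rank_parent: "\<And>g. 0 < r g \<Longrightarrow> r (p g) < r g"
    and path: "\<And>i. K \<le> i \<Longrightarrow> 0 < r (z i) \<and> (p (z (Suc i)) = p (z i) \<or> p (z (Suc i)) = z i)"
    and changes: "\<exists>\<^sub>F i in sequentially. p (z (Suc i)) \<noteq> p (z i)"
  shows "\<exists>\<^sub>F k in sequentially. p (z (Suc k)) = z k \<and> M < r (z k)"
  unfolding frequently_sequentially
proof (induction M)
  case 0
  show ?case
  proof
    fix N
    obtain k where "max N K \<le> k" "p (z (Suc k)) \<noteq> p (z k)"
      using changes unfolding frequently_sequentially by blast
    then show "\<exists>k\<ge>N. p (z (Suc k)) = z k \<and> 0 < r (z k)"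
      using path[of k] by auto
  qed
next
  case (Suc M)
  show ?case
  proof
    fix N
    obtain k where k: "max N K \<le> k" "p (z (Suc k)) = z k" "M < r (z k)"
      using Suc.IH by blast
    obtain k' where k': "Suc k \<le> k'" "p (z (Suc k')) = z k'"
      using Suc.IH by blast
    have "ancestor p r (z k') (z k)"
      using k k' path by (intro ancestor_along_trajectory[of k]) auto
    then have "r (z k) < r (z k')"
      using ancestor_rank_less[of r p, OF rank_parent] by blast
    with k k' show "\<exists>k\<ge>N. p (z (Suc k)) = z k \<and> Suc M < r (z k)"
      by (intro exI[of _ k']) auto
  qed
qed

lemma translate_leaves_parent_event:
  fixes r :: "'g::group_add \<Rightarrow> nat"
  assumes "h \<noteq> 0"
    and equivariant: "\<forall>\<^sub>F i in sequentially. N < r (z i) \<longrightarrow> p (h + z i) = h + p (z i)"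
    and unbounded: "\<not> bdd_above (range (\<lambda>i. r (z i)))"
    and "z \<in> eventually_in {g. p g = c}"
  shows "(\<lambda>n. h + z n) \<notin> eventually_in {g. p g = c}"
proof
  assume "(\<lambda>n. h + z n) \<in> eventually_in {g. p g = c}"
  with assms(4) equivariant
  have "\<forall>\<^sub>F i in sequentially. p (z i) = c \<and> p (h + z i) = c \<and> (N < r (z i) \<longrightarrow> p (h + z i) = h + p (z i))"
    unfolding eventually_in_def by (simp add: eventually_conj_iff)
  with frequently_less_if_unbounded[OF unbounded, of N]
  have "\<exists>\<^sub>F i in sequentially. N < r (z i) \<and> p (z i) = c \<and> p (h + z i) = c \<and>
      (N < r (z i) \<longrightarrow> p (h + z i) = h + p (z i))"
    by (rule frequently_eventually_frequently)
  then obtain i where "p (z i) = c" "p (h + z i) = c" "p (h + z i) = h + p (z i)"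
    using frequently_ex by blast
  with \<open>h \<noteq> 0\<close> show False
    by (metis add.left_neutral add_right_cancel)
qed

lemma translate_leaves_ancestor_event:
  fixes r :: "'g::group_add \<Rightarrow> nat"
  assumes rank_parent: "\<And>g. 0 < r g \<Longrightarrow> r (p g) < r g"
    and "h \<noteq> 0"
    and path: "\<forall>\<^sub>F i in sequentially. 0 < r (z i) \<and> (p (z (Suc i)) = p (z i) \<or> p (z (Suc i)) = z i)"
    and equivariant: "\<forall>\<^sub>F i in sequentially. N < r (z i) \<longrightarrow> r (h + z i) = r (z i) \<and> p (h + z i) = h + p (z i)"
    and changes: "\<exists>\<^sub>F i in sequentially. p (z (Suc i)) \<noteq> p (z i)"
  shows "\<exists>c. z \<in> eventually_in {g. ancestor p r g c} \<and> (\<lambda>n. h + z n) \<notin> eventually_in {g. ancestor p r g c}"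
proof -
  define y where "y n = h + z n" for n
  obtain K where K: "\<And>i. K \<le> i \<Longrightarrow> 0 < r (z i) \<and> (p (z (Suc i)) = p (z i) \<or> p (z (Suc i)) = z i) \<and>
      (N < r (z i) \<longrightarrow> r (y i) = r (z i) \<and> p (y i) = h + p (z i))"
    using eventually_conj[OF path equivariant] unfolding y_def eventually_sequentially by blast
  obtain k where k: "K \<le> k" "p (z (Suc k)) = z k" "N < r (z k)"
    using frequently_switch_of_large_rank[of r p K z N, OF rank_parent _ changes] K
    unfolding frequently_sequentially by blast
  have z_ancestor: "ancestor p r (z i) (z k)" if "k < i" for i
    using K k that by (intro ancestor_along_trajectory) auto
  have large: "N < r (z i)" if "k \<le> i" for i
    using k z_ancestor[of i] ancestor_rank_less[of r p, OF rank_parent] that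
    by (cases "k = i") (auto dest: order.strict_trans)
  have y_ancestor: "ancestor p r (y i) (y k)" if "k < i" for i
  proof (rule ancestor_along_trajectory[OF _ _ that])
    show "p (y (Suc k)) = y k"
      using K[of "Suc k"] large[of "Suc k"] k by (auto simp: y_def)
    fix i assume "k < i"
    then show "0 < r (y i) \<and> (p (y (Suc i)) = p (y i) \<or> p (y (Suc i)) = y i)"
      using K[of i] K[of "Suc i"] large[of i] large[of "Suc i"] k by (auto simp: y_def)
  qed
  have "y \<notin> eventually_in {g. ancestor p r g (z k)}"
  proof
    assume "y \<in> eventually_in {g. ancestor p r g (z k)}"
    then obtain M where "\<And>i. M \<le> i \<Longrightarrow> ancestor p r (y i) (z k)"
      unfolding eventually_in_def eventually_sequentially by blast
    then have "k < max M (Suc k)" "ancestor p r (y (max M (Suc k))) (z k)"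
      by auto
    moreover have "r (y k) = r (z k)"
      using K[of k] k by simp
    ultimately have "y k = z k"
      using ancestor_eq_if_rank_eq[of r p, OF rank_parent y_ancestor] by blast
    with \<open>h \<noteq> 0\<close> show False
      unfolding y_def by (metis add.left_neutral add_right_cancel)
  qed
  moreover have "z \<in> eventually_in {g. ancestor p r g (z k)}"
    using z_ancestor unfolding eventually_in_def eventually_sequentially by (auto intro: exI[of _ "Suc k"])
  ultimately show ?thesis
    unfolding y_def by blast
qed

definition parent_tail_events :: "('g \<Rightarrow> 'g) \<Rightarrow> ('g \<Rightarrow> nat) \<Rightarrow> (nat \<Rightarrow> 'g) set set" where
  "parent_tail_events p r =
     range (\<lambda>c. eventually_in {g. p g = c}) \<union> range (\<lambda>c. eventually_in {g. ancestor p r g c})"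

lemma countable_parent_tail_events: "countable (parent_tail_events p r :: (nat \<Rightarrow> 'g::countable) set set)"
  unfolding parent_tail_events_def by (intro countable_Un countable_image countableI_type)

lemma parent_tail_events_shift_invariant:
  "parent_tail_events p r \<subseteq> (shift_invariant_sets :: (nat \<Rightarrow> 'g::countable) set set)"
  unfolding parent_tail_events_def by (intro Un_least image_subsetI eventually_in_shift_invariant)

lemma translate_separated_by_tail_event:
  fixes r :: "'g::group_add \<Rightarrow> nat"
  assumes rank_parent: "\<And>g. 0 < r g \<Longrightarrow> r (p g) < r g"
    and "h \<noteq> 0"
    and path: "\<forall>\<^sub>F i in sequentially. 0 < r (z i) \<and> (p (z (Suc i)) = p (z i) \<or> p (z (Suc i)) = z i)"
    and equivariant: "\<forall>\<^sub>F i in sequentially. N < r (z i) \<longrightarrow> r (h + z i) = r (z i) \<and> p (h + z i) = h + p (z i)"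
    and unbounded: "\<not> bdd_above (range (\<lambda>i. r (z i)))"
  shows "\<exists>B \<in> parent_tail_events p r. z \<in> B \<longleftrightarrow> (\<lambda>n. h + z n) \<notin> B"
proof (cases "\<exists>c. \<forall>\<^sub>F i in sequentially. p (z i) = c")
  case True
  then obtain c where c: "z \<in> eventually_in {g. p g = c}"
    by (auto simp: eventually_in_def)
  moreover have "(\<lambda>n. h + z n) \<notin> eventually_in {g. p g = c}"
    using equivariant by (intro translate_leaves_parent_event[OF \<open>h \<noteq> 0\<close> _ unbounded c]) (auto elim: eventually_mono)
  moreover have "eventually_in {g. p g = c} \<in> parent_tail_events p r"
    by (simp add: parent_tail_events_def)
  ultimately show ?thesis
    by (intro bexI[of _ "eventually_in {g. p g = c}"]) simp_all
next
  case False
  then have "\<exists>\<^sub>F i in sequentially. p (z (Suc i)) \<noteq> p (z i)"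
    using eventually_const_if_eventually_Suc_eq[of "\<lambda>i. p (z i)"] by (auto simp: not_eventually[symmetric])
  then obtain c where "z \<in> eventually_in {g. ancestor p r g c}" "(\<lambda>n. h + z n) \<notin> eventually_in {g. ancestor p r g c}"
    using translate_leaves_ancestor_event[OF rank_parent \<open>h \<noteq> 0\<close> path equivariant] by blast
  moreover have "eventually_in {g. ancestor p r g c} \<in> parent_tail_events p r"
    by (simp add: parent_tail_events_def)
  ultimately show ?thesis
    by (intro bexI[of _ "eventually_in {g. ancestor p r g c}"]) simp_all
qed

lemma rank_eq_if_mem:
  assumes "\<forall>i\<ge>1. \<forall>j\<ge>1. i \<noteq> j \<longrightarrow> W i \<inter> W j = {}" "1 \<le> j" "g \<in> W j"
  shows "rank W g = j"
proof -
  have "(THE i. 1 \<le> i \<and> g \<in> W i) = j"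
    using assms by (intro the_equality) auto
  with assms(2,3) show ?thesis
    unfolding rank_def by auto
qed

lemma rank_parent_less:
  assumes "\<forall>g \<in> (\<Union>i\<in>{1..}. W i). rank W (p g) < rank W g" and "0 < rank W g"
  shows "rank W (p g) < rank W g"
proof -
  have "\<exists>i\<ge>1. g \<in> W i"
    using \<open>0 < rank W g\<close> unfolding rank_def by (auto split: if_splits)
  with assms(1) show ?thesis
    by blast
qed

lemma rank_translate:
  assumes disj: "\<forall>i\<ge>1. \<forall>j\<ge>1. i \<noteq> j \<longrightarrow> W i \<inter> W j = {}" and sub: "\<forall>i\<ge>1. W' i \<subseteq> W i"
    and equivariant: "\<forall>i>N. (\<lambda>w. h + w) ` W' i \<subseteq> W i \<and> (\<forall>w\<in>W' i. p (h + w) = h + p w)"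
    and "1 \<le> j" "w \<in> W' j"
  shows "0 < rank W w \<and> (N < rank W w \<longrightarrow> rank W (h + w) = rank W w \<and> p (h + w) = h + p w)"
proof -
  have "rank W w = j"
    using assms by (intro rank_eq_if_mem[OF disj]) auto
  moreover have "rank W (h + w) = j" if "N < j"
  proof -
    have "h + w \<in> W j"
      using equivariant that \<open>w \<in> W' j\<close> by blast
    then show ?thesis
      by (rule rank_eq_if_mem[OF disj \<open>1 \<le> j\<close>])
  qed
  ultimately show ?thesis
    using assms by auto
qed

lemma translate_separated_by_tail_event_rank:
  fixes h :: "'g::group_add"
  assumes disj: "\<forall>i\<ge>1. \<forall>j\<ge>1. i \<noteq> j \<longrightarrow> W i \<inter> W j = {}" and sub: "\<forall>i\<ge>1. W' i \<subseteq> W i"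
    and rank_parent: "\<forall>g \<in> (\<Union>i\<in>{1..}. W i). rank W (p g) < rank W g"
    and equivariant: "\<forall>i>N. (\<lambda>w. h + w) ` W' i \<subseteq> W i \<and> (\<forall>w\<in>W' i. p (h + w) = h + p w)"
    and "h \<noteq> 0"
    and "\<exists>i0. \<forall>i>i0. \<exists>j\<ge>1. z i \<in> W' j"
    and "\<exists>i0. \<forall>i>i0. p (z (Suc i)) = p (z i) \<or> p (z (Suc i)) = z i"
    and unbounded: "\<not> bdd_above (range (\<lambda>i. rank W (z i)))"
  shows "\<exists>B \<in> parent_tail_events p (rank W). z \<in> B \<longleftrightarrow> (\<lambda>n. h + z n) \<notin> B"
proof -
  have "\<forall>\<^sub>F i in sequentially. \<exists>j\<ge>1. z i \<in> W' j"
    using assms(6) by (simp add: eventually_at_top_dense)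
  then have ranks: "\<forall>\<^sub>F i in sequentially. 0 < rank W (z i) \<and>
      (N < rank W (z i) \<longrightarrow> rank W (h + z i) = rank W (z i) \<and> p (h + z i) = h + p (z i))"
    by (rule eventually_mono) (use rank_translate[OF disj sub equivariant] in blast)
  have steps: "\<forall>\<^sub>F i in sequentially. p (z (Suc i)) = p (z i) \<or> p (z (Suc i)) = z i"
    using assms(7) by (simp add: eventually_at_top_dense)
  have path: "\<forall>\<^sub>F i in sequentially. 0 < rank W (z i) \<and> (p (z (Suc i)) = p (z i) \<or> p (z (Suc i)) = z i)"
    using ranks steps by eventually_elim blast
  have "\<forall>\<^sub>F i in sequentially. N < rank W (z i) \<longrightarrow>
      rank W (h + z i) = rank W (z i) \<and> p (h + z i) = h + p (z i)"
    using ranks by eventually_elim blast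
  from translate_separated_by_tail_event[OF rank_parent_less[OF rank_parent] \<open>h \<noteq> 0\<close> path this unbounded]
  show ?thesis .
qed

lemma nonzero_exists_if_unbounded:
  fixes f :: "'a::zero \<Rightarrow> nat" and z :: "nat \<Rightarrow> 'a"
  assumes "\<not> bdd_above (range (\<lambda>i. f (z i)))"
  shows "\<exists>h::'a. h \<noteq> 0"
proof (rule ccontr)
  assume "\<nexists>h::'a. h \<noteq> 0"
  then have "z i = 0" for i
    by blast
  then have "range (\<lambda>i. f (z i)) = {f 0}"
    by simp
  with assms show False
    by simp
qed

theorem lemma1:
  fixes \<nu> :: "'g::{group_add,countable} pmf"
    and W W' :: "nat \<Rightarrow> 'g set"
    and p :: "'g \<Rightarrow> 'g"
  assumes full_support: "set_pmf \<nu> = UNIV"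
    and sub: "\<forall>i\<ge>1. W' i \<subseteq> W i"
    and disj: "\<forall>i\<ge>1. \<forall>j\<ge>1. i \<noteq> j \<longrightarrow> W i \<inter> W j = {}"
    and A1: "\<forall>g \<in> (\<Union>i\<in>{1..}. W i). rank W (p g) < rank W g"
    and A2: "\<forall>h. \<exists>N. \<forall>i>N. (\<lambda>w. h + w) ` W' i \<subseteq> W i \<and> (\<forall>w\<in>W' i. p (h + w) = h + p w)"
    and A3: "AE z in rw_traj \<nu>. \<exists>i0. \<forall>i>i0. \<exists>j\<ge>1. z i \<in> W' j"
    and A4: "AE z in rw_traj \<nu>. \<exists>i0. \<forall>i>i0. p (z (Suc i)) = p (z i) \<or> p (z (Suc i)) = z i"
    and A5: "AE z in rw_traj \<nu>. \<not> bdd_above (range (\<lambda>i. rank W (z i)))"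
  shows "poisson_boundary_nontrivial \<nu> \<and> boundary_action_essentially_free \<nu>"
proof -
  have "AE z in rw_traj \<nu>. \<exists>B \<in> parent_tail_events p (rank W). z \<in> B \<longleftrightarrow> z \<notin> left_translate h B"
    if "h \<noteq> 0" for h
  proof -
    obtain N where N: "\<forall>i>N. (\<lambda>w. - h + w) ` W' i \<subseteq> W i \<and> (\<forall>w\<in>W' i. p (- h + w) = - h + p w)"
      using A2 by blast
    show ?thesis
      using A3 A4 A5
    proof eventually_elim
      case (elim z)
      from that have "- h \<noteq> 0"
        by simp
      from translate_separated_by_tail_event_rank[OF disj sub A1 N this elim] show ?case
        by (simp add: left_translate_def)
    qed
  qed
  then have free: "boundary_action_essentially_free \<nu>"
    by (rule essentially_free_if_separated[OF countable_parent_tail_events parent_tail_events_shift_invariant])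
  from eventually_happens'[OF prob_space.ae_filter_bot[OF prob_space_rw_traj] A5]
  obtain z :: "nat \<Rightarrow> 'g" where "\<not> bdd_above (range (\<lambda>i. rank W (z i)))" ..
  from nonzero_exists_if_unbounded[of "rank W" z, OF this]
  obtain h :: 'g where "h \<noteq> 0" ..
  with free show ?thesis
    using poisson_boundary_nontrivial_if_essentially_free[OF full_support] by blast
qed

end
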